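(* (a) For $\mathbf{a}=(a_1,\dots,a_k)\in\mathbb{N}^k$, $$L^{(k+1)}(\mathbf{a})\le\min\left\{\tau_{k+1}(\mathbf{a})(\log2)^k,\ \prod_{i=1}^k(\log a_1+\cdots+\log a_i+\log2)\right\}.$$ (b) If $\mathbf{a},\mathbf{b}\in\mathbb{N}^k$ and $\gcd(a_1\cdots a_k,b_1\cdots b_k)=1$, then $L^{(k+1)}(a_1b_1,\dots,a_kb_k)\le\tau_{k+1}(\mathbf{a})L^{(k+1)}(\mathbf{b})$.
   Context: For $\mathbf{a}\in\mathbb{N}^k$, $L^{(k+1)}(\mathbf{a})$ is the $k$-dimensional Lebesgue measure of $\bigcup[\log(d_1/2),\log d_1)\times\cdots\times[\log(d_k/2),\log d_k)$, the union over all $(d_1,\dots,d_k)\in\mathbb{N}^k$ with $d_1\cdots d_i\mid a_1\cdots a_i$ for $1\le i\le k$. $\tau_{k+1}(\mathbf{a})=|\{(d_1,\dots,d_k)\in\mathbb{N}^k: d_1\cdots d_i\mid a_1\cdots a_i\ (1\le i\le k)\}|$. *)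

theory Defs
  imports "HOL-Analysis.Analysis" "HOL-Probability.Probability"
begin

text \<open>Tuples in N^k are functions nat => nat, only the values at indices 0..k-1
  (i.e. a_1..a_k shifted to 0-based) matter.  The condition
  d_1...d_i | a_1...a_i for 1 <= i <= k becomes prod over {..i} for i < k.\<close>

definition divtuples :: "nat \<Rightarrow> (nat \<Rightarrow> nat) \<Rightarrow> (nat \<Rightarrow> nat) set" where
  "divtuples k a = {d \<in> Pi\<^sub>E {..<k} (\<lambda>_. {1..}).
      \<forall>i<k. (\<Prod>j\<le>i. d j) dvd (\<Prod>j\<le>i. a j)}"

definition tau :: "nat \<Rightarrow> (nat \<Rightarrow> nat) \<Rightarrow> nat" where
  "tau k a = card (divtuples k a)"

definition Lmeas :: "nat \<Rightarrow> (nat \<Rightarrow> nat) \<Rightarrow> real" where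
  "Lmeas k a = measure (Pi\<^sub>M {..<k} (\<lambda>_. lborel))
     (\<Union>d\<in>divtuples k a. Pi\<^sub>E {..<k} (\<lambda>i. {ln (real (d i) / 2) ..< ln (real (d i))}))"

end

theory Submission imports Defs begin

text \<open>
  Write \<open>B(d) = \<Prod>\<^sub>i [log (d\<^sub>i/2), log d\<^sub>i)\<close>, a box of volume \<open>(log 2)\<^sup>k\<close>. Part (a) is the union
  bound together with the observation that every \<open>B(d)\<close> lies in the box
  \<open>\<Prod>\<^sub>i [-log 2, log (a\<^sub>1\<cdots>a\<^sub>i))\<close>. For part (b), call \<open>d\<close> admissible for \<open>a\<close> if
  \<open>d\<^sub>1\<cdots>d\<^sub>i | a\<^sub>1\<cdots>a\<^sub>i\<close> for all \<open>i\<close>. A tuple \<open>d\<close> admissible for \<open>ab\<close> factors as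
  \<open>d = e f\<close> with \<open>e\<close> admissible for \<open>a\<close> and \<open>f\<close> admissible for \<open>b\<close>: take the quotients of the
  chains \<open>gcd(d\<^sub>1\<cdots>d\<^sub>i, a\<^sub>1\<cdots>a\<^sub>i)\<close> and \<open>gcd(d\<^sub>1\<cdots>d\<^sub>i, b\<^sub>1\<cdots>b\<^sub>i)\<close>, whose product is
  \<open>d\<^sub>1\<cdots>d\<^sub>i\<close> by coprimality. Hence \<open>B(d) = log e + B(f)\<close>, so the union for \<open>ab\<close> is covered
  by \<open>\<tau>\<^sub>k\<^sub>+\<^sub>1(a)\<close> translates of the union for \<open>b\<close>, and Lebesgue measure is translation invariant.
\<close>

definition chain_quotients :: "(nat \<Rightarrow> nat) \<Rightarrow> nat \<Rightarrow> nat" where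
  "chain_quotients E i = (case i of 0 \<Rightarrow> E 0 | Suc j \<Rightarrow> E (Suc j) div E j)"

lemma chain_quotients_cong:
  "(\<And>j. j \<le> i \<Longrightarrow> E j = F j) \<Longrightarrow> chain_quotients E i = chain_quotients F i"
  by (simp add: chain_quotients_def split: nat.split)

lemma prod_chain_quotients:
  assumes "\<And>j. j < i \<Longrightarrow> E j dvd E (Suc j)"
  shows "(\<Prod>j\<le>i. chain_quotients E j) = E i"
  using assms
proof (induction i)
  case 0
  then show ?case by (simp add: chain_quotients_def)
next
  case (Suc i)
  then have "(\<Prod>j\<le>Suc i. chain_quotients E j) = E i * (E (Suc i) div E i)"
    by (simp add: chain_quotients_def)
  also have "\<dots> = E (Suc i)"
    using Suc.prems by simp
  finally show ?case .
qed

lemma chain_quotients_pos: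
  assumes "E i > 0" and "\<And>j. Suc j = i \<Longrightarrow> E j dvd E i"
  shows "chain_quotients E i > 0"
  using assms by (cases i) (auto simp: chain_quotients_def elim!: dvdE)

lemma chain_quotients_mult:
  assumes "\<And>j. Suc j = i \<Longrightarrow> E j dvd E i \<and> F j dvd F i"
  shows "chain_quotients (\<lambda>j. E j * F j) i = chain_quotients E i * chain_quotients F i"
  using assms by (cases i) (auto simp: chain_quotients_def div_mult_div_if_dvd)

lemma chain_quotients_prefix_prod:
  assumes "\<And>j. j < i \<Longrightarrow> (d j :: nat) > 0"
  shows "chain_quotients (\<lambda>i. \<Prod>j\<le>i. d j) i = d i"
proof (cases i)
  case (Suc m)
  have "(\<Prod>j\<le>m. d j) > 0"
    using assms Suc by (intro prod_pos) auto
  then show ?thesis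
    using Suc by (simp add: chain_quotients_def)
qed (simp add: chain_quotients_def)

lemma chain_quotients_in_divtuples:
  assumes pos: "\<And>i. i < k \<Longrightarrow> E i > 0"
    and chain: "\<And>i. Suc i < k \<Longrightarrow> E i dvd E (Suc i)"
    and dvd: "\<And>i. i < k \<Longrightarrow> E i dvd (\<Prod>j\<le>i. a j)"
  shows "restrict (chain_quotients E) {..<k} \<in> divtuples k a"
proof -
  have "(\<Prod>j\<le>i. restrict (chain_quotients E) {..<k} j) = E i" if "i < k" for i
  proof -
    have "(\<Prod>j\<le>i. restrict (chain_quotients E) {..<k} j) = (\<Prod>j\<le>i. chain_quotients E j)"
      using that by (intro prod.cong) auto
    also have "\<dots> = E i"
      using that by (intro prod_chain_quotients chain) simp
    finally show ?thesis .
  qed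
  moreover have "chain_quotients E i \<ge> 1" if "i < k" for i
    using that pos chain by (auto intro!: chain_quotients_pos simp: Suc_le_eq)
  ultimately show ?thesis
    using dvd by (auto simp: divtuples_def)
qed

lemma divtuples_pos: "d \<in> divtuples k a \<Longrightarrow> i < k \<Longrightarrow> d i > 0"
  by (auto simp: divtuples_def PiE_def Pi_def Suc_le_eq)

lemma divtuples_le:
  assumes d: "d \<in> divtuples k a" and apos: "\<forall>i<k. a i > 0" and i: "i < k"
  shows "d i \<le> (\<Prod>j\<le>i. a j)"
proof (rule dvd_imp_le)
  have "d i dvd (\<Prod>j\<le>i. d j)"
    by (rule dvd_prodI) auto
  also have "\<dots> dvd (\<Prod>j\<le>i. a j)"
    using d i by (auto simp: divtuples_def)
  finally show "d i dvd (\<Prod>j\<le>i. a j)" .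
  show "(\<Prod>j\<le>i. a j) > 0"
    using apos i by (auto intro!: prod_pos)
qed

lemma finite_divtuples:
  assumes apos: "\<forall>i<k. a i > 0"
  shows "finite (divtuples k a)"
proof (rule finite_subset)
  define M where "M = (\<Prod>i<k. a i)"
  have "M > 0"
    using apos by (auto simp: M_def intro!: prod_pos)
  have "d i \<le> M" if "d \<in> divtuples k a" "i < k" for d i
  proof -
    have "(\<Prod>j\<le>i. a j) \<le> M"
      using \<open>M > 0\<close> \<open>i < k\<close> by (auto simp: M_def intro!: dvd_imp_le prod_dvd_prod_subset)
    then show ?thesis
      using divtuples_le[OF that(1) apos that(2)] by simp
  qed
  then show "divtuples k a \<subseteq> Pi\<^sub>E {..<k} (\<lambda>_. {..M})"
    by (auto simp: divtuples_def PiE_def Pi_def)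
  show "finite (Pi\<^sub>E {..<k} (\<lambda>_. {..M}))"
    by (intro finite_PiE) auto
qed

lemma dvd_mult_coprime_eq_gcd_mult:
  assumes "coprime (A :: nat) B" and "D dvd A * B"
  shows "D = gcd D A * gcd D B"
proof -
  obtain x y where D: "D = x * y" and "x dvd A" "y dvd B"
    using division_decomp[OF assms(2)] by blast
  then have "coprime A y" "coprime B x"
    using assms(1) coprime_divisors coprime_commute dvd_refl by metis+
  have "gcd D A = x"
    using \<open>coprime A y\<close> \<open>x dvd A\<close> by (simp add: D gcd_mult_left_right_cancel gcd_nat.absorb1)
  moreover have "gcd D B = y"
    using \<open>coprime B x\<close> \<open>y dvd B\<close>
    by (simp add: D mult.commute[of x] gcd_mult_left_right_cancel gcd_nat.absorb1)
  ultimately show ?thesis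
    using D by simp
qed

lemma divtuples_mult_decompose:
  assumes apos: "\<forall>i<k. a i > 0" and bpos: "\<forall>i<k. b i > 0"
    and cop: "coprime (\<Prod>i<k. a i) (\<Prod>i<k. b i)"
    and d: "d \<in> divtuples k (\<lambda>i. a i * b i)"
  obtains e f where "e \<in> divtuples k a" "f \<in> divtuples k b" "\<forall>i<k. d i = e i * f i"
proof -
  define D where "D i = (\<Prod>j\<le>i. d j)" for i
  define E where "E i = gcd (D i) (\<Prod>j\<le>i. a j)" for i
  define F where "F i = gcd (D i) (\<Prod>j\<le>i. b j)" for i
  have "D i > 0" if "i < k" for i
    using that by (auto simp: D_def intro!: prod_pos divtuples_pos[OF d])
  then have Epos: "E i > 0" and Fpos: "F i > 0" if "i < k" for i
    using that by (simp_all add: E_def F_def)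
  have Echain: "E i dvd E (Suc i)" and Fchain: "F i dvd F (Suc i)" for i
    by (auto simp: E_def F_def D_def intro!: gcd_mono)
  have DEF: "D i = E i * F i" if "i < k" for i
  proof (unfold E_def F_def, rule dvd_mult_coprime_eq_gcd_mult)
    have "(\<Prod>j\<le>i. a j) dvd (\<Prod>i<k. a i)" "(\<Prod>j\<le>i. b j) dvd (\<Prod>i<k. b i)"
      using that by (auto intro!: prod_dvd_prod_subset)
    then show "coprime (\<Prod>j\<le>i. a j) (\<Prod>j\<le>i. b j)"
      using cop coprime_divisors by blast
    show "D i dvd (\<Prod>j\<le>i. a j) * (\<Prod>j\<le>i. b j)"
      using d that by (simp add: divtuples_def D_def prod.distrib)
  qed
  show ?thesis
  proof
    show "restrict (chain_quotients E) {..<k} \<in> divtuples k a"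
      using Epos Echain by (intro chain_quotients_in_divtuples) (auto simp: E_def)
    show "restrict (chain_quotients F) {..<k} \<in> divtuples k b"
      using Fpos Fchain by (intro chain_quotients_in_divtuples) (auto simp: F_def)
    have "d i = chain_quotients E i * chain_quotients F i" if "i < k" for i
    proof -
      have "d i = chain_quotients D i"
        unfolding D_def using that
        by (intro chain_quotients_prefix_prod[symmetric] divtuples_pos[OF d]) auto
      also have "\<dots> = chain_quotients (\<lambda>j. E j * F j) i"
        using that by (intro chain_quotients_cong DEF) simp
      also have "\<dots> = chain_quotients E i * chain_quotients F i"
        using Echain Fchain by (intro chain_quotients_mult) auto
      finally show ?thesis .
    qed
    then show "\<forall>i<k. d i =
        restrict (chain_quotients E) {..<k} i * restrict (chain_quotients F) {..<k} i"
      by simp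
  qed
qed

lemma emeasure_PiM_lborel_box:
  fixes l u :: "'i \<Rightarrow> real"
  assumes "finite I" and "\<And>i. i \<in> I \<Longrightarrow> l i \<le> u i"
  shows "emeasure (Pi\<^sub>M I (\<lambda>_. lborel)) (Pi\<^sub>E I (\<lambda>i. {l i..<u i})) = ennreal (\<Prod>i\<in>I. u i - l i)"
proof -
  interpret product_sigma_finite "\<lambda>_. lborel :: real measure"
    by standard
  have "emeasure (Pi\<^sub>M I (\<lambda>_. lborel)) (Pi\<^sub>E I (\<lambda>i. {l i..<u i})) = (\<Prod>i\<in>I. emeasure lborel {l i..<u i})"
    using assms(1) by (intro emeasure_PiM) auto
  also have "\<dots> = ennreal (\<Prod>i\<in>I. u i - l i)"
    using assms(2) by (simp add: prod_ennreal)
  finally show ?thesis .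
qed

lemma fmeasurable_PiM_lborel_box:
  fixes l u :: "'i \<Rightarrow> real"
  assumes "finite I" and "\<And>i. i \<in> I \<Longrightarrow> l i \<le> u i"
  shows "Pi\<^sub>E I (\<lambda>i. {l i..<u i}) \<in> fmeasurable (Pi\<^sub>M I (\<lambda>_. lborel))"
  using emeasure_PiM_lborel_box[OF assms] assms(1)
  by (intro fmeasurableI sets_PiM_I_finite) auto

lemma measure_PiM_lborel_box:
  fixes l u :: "'i \<Rightarrow> real"
  assumes "finite I" and "\<And>i. i \<in> I \<Longrightarrow> l i \<le> u i"
  shows "measure (Pi\<^sub>M I (\<lambda>_. lborel)) (Pi\<^sub>E I (\<lambda>i. {l i..<u i})) = (\<Prod>i\<in>I. u i - l i)"
  using emeasure_PiM_lborel_box[OF assms] assms(2)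
  by (simp add: measure_def prod_nonneg)

lemma distr_PiM_lborel_translate:
  fixes c :: "'i \<Rightarrow> real"
  assumes "finite I"
  shows "distr (Pi\<^sub>M I (\<lambda>_. lborel)) (Pi\<^sub>M I (\<lambda>_. lborel)) (\<lambda>x. restrict (\<lambda>i. x i + c i) I)
    = Pi\<^sub>M I (\<lambda>_. lborel)" (is "distr ?M ?M ?T = ?M")
proof -
  interpret product_sigma_finite "\<lambda>_. lborel :: real measure"
    by standard
  show ?thesis
  proof (rule PiM_eqI)
    fix A :: "'i \<Rightarrow> real set" assume A: "\<And>i. i \<in> I \<Longrightarrow> A i \<in> sets lborel"
    have "emeasure (distr ?M ?M ?T) (Pi\<^sub>E I A) = emeasure ?M (?T -` Pi\<^sub>E I A \<inter> space ?M)"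
      using A assms by (intro emeasure_distr sets_PiM_I_finite) auto
    also have "?T -` Pi\<^sub>E I A \<inter> space ?M = Pi\<^sub>E I (\<lambda>i. (\<lambda>x. c i + x) -` A i)"
      by (auto simp: space_PiM PiE_def Pi_def extensional_def add.commute)
    also have "emeasure ?M \<dots> = (\<Prod>i\<in>I. emeasure lborel ((\<lambda>x. c i + x) -` A i))"
      using A assms by (intro emeasure_PiM) (auto intro!: measurable_sets_borel[OF _ A])
    also have "\<dots> = (\<Prod>i\<in>I. emeasure lborel (A i))"
    proof (intro prod.cong refl)
      fix i assume i: "i \<in> I"
      have "emeasure lborel (A i) = emeasure (distr lborel borel ((+) (c i))) (A i)"
        by (simp add: lborel_distr_plus)
      also have "\<dots> = emeasure lborel ((+) (c i) -` A i)"
        using A[OF i] by (subst emeasure_distr) auto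
      finally show "emeasure lborel ((\<lambda>x. c i + x) -` A i) = emeasure lborel (A i)"
        by simp
    qed
    finally show "emeasure (distr ?M ?M ?T) (Pi\<^sub>E I A) = (\<Prod>i\<in>I. emeasure lborel (A i))" .
  qed (use assms in simp_all)
qed

lemma
  fixes c :: "'i \<Rightarrow> real"
  assumes "finite I"
  defines "M \<equiv> Pi\<^sub>M I (\<lambda>_. lborel)" and "T \<equiv> \<lambda>x. restrict (\<lambda>i. x i + c i) I"
  assumes A: "A \<in> fmeasurable M"
  shows fmeasurable_PiM_lborel_translate: "T -` A \<inter> space M \<in> fmeasurable M"
    and measure_PiM_lborel_translate: "measure M (T -` A \<inter> space M) = measure M A"
proof -
  have T: "T \<in> M \<rightarrow>\<^sub>M M"
    unfolding T_def M_def by measurable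
  have "A \<in> sets M"
    using A by (rule fmeasurableD)
  have "emeasure M (T -` A \<inter> space M) = emeasure M A"
    using emeasure_distr[OF T \<open>A \<in> sets M\<close>] distr_PiM_lborel_translate[OF assms(1), of c]
    by (simp add: M_def T_def)
  then show "T -` A \<inter> space M \<in> fmeasurable M" "measure M (T -` A \<inter> space M) = measure M A"
    using A measurable_sets[OF T \<open>A \<in> sets M\<close>] by (auto simp: measure_def fmeasurable_def)
qed

definition log_box :: "nat \<Rightarrow> (nat \<Rightarrow> nat) \<Rightarrow> (nat \<Rightarrow> real) set" where
  "log_box k d = Pi\<^sub>E {..<k} (\<lambda>i. {ln (real (d i) / 2) ..< ln (real (d i))})"

lemma Lmeas_eq_measure_log_boxes:
  "Lmeas k a = measure (Pi\<^sub>M {..<k} (\<lambda>_. lborel)) (\<Union>d\<in>divtuples k a. log_box k d)"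
  unfolding Lmeas_def log_box_def ..

lemma fmeasurable_log_box:
  assumes "\<And>i. i < k \<Longrightarrow> d i > 0"
  shows "log_box k d \<in> fmeasurable (Pi\<^sub>M {..<k} (\<lambda>_. lborel))"
  unfolding log_box_def using assms by (intro fmeasurable_PiM_lborel_box) auto

lemma measure_log_box:
  assumes "\<And>i. i < k \<Longrightarrow> d i > 0"
  shows "measure (Pi\<^sub>M {..<k} (\<lambda>_. lborel)) (log_box k d) = (ln 2) ^ k"
proof -
  have "measure (Pi\<^sub>M {..<k} (\<lambda>_. lborel)) (log_box k d)
      = (\<Prod>i<k. ln (real (d i)) - ln (real (d i) / 2))"
    unfolding log_box_def using assms by (intro measure_PiM_lborel_box) auto
  also have "\<dots> = (\<Prod>i<k. ln 2)"
    using assms by (intro prod.cong) (auto simp: ln_div)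
  finally show ?thesis
    by simp
qed

lemma fmeasurable_Union_log_boxes:
  assumes "\<forall>i<k. a i > 0"
  shows "(\<Union>d\<in>divtuples k a. log_box k d) \<in> fmeasurable (Pi\<^sub>M {..<k} (\<lambda>_. lborel))"
  using finite_divtuples[OF assms]
  by (intro fmeasurable.finite_UN fmeasurable_log_box divtuples_pos)

lemma log_box_subset_box:
  assumes d: "d \<in> divtuples k a" and apos: "\<forall>i<k. a i > 0"
  shows "log_box k d \<subseteq> Pi\<^sub>E {..<k} (\<lambda>i. {- ln 2 ..< (\<Sum>j\<le>i. ln (real (a j)))})"
  unfolding log_box_def
proof (intro PiE_mono ivl_subset[THEN iffD2] disjI2 conjI)
  fix i assume "i \<in> {..<k}"
  then have i: "i < k" by simp
  have "d i \<ge> 1"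
    using divtuples_pos[OF d i] by simp
  then show "- ln 2 \<le> ln (real (d i) / 2)"
    by (simp add: ln_div)
  have "ln (real (d i)) \<le> ln (real (\<Prod>j\<le>i. a j))"
    using \<open>d i \<ge> 1\<close> of_nat_mono[OF divtuples_le[OF d apos i]] by (intro ln_mono) auto
  also have "\<dots> = (\<Sum>j\<le>i. ln (real (a j)))"
    using apos i by (subst of_nat_prod, intro ln_prod) auto
  finally show "ln (real (d i)) \<le> (\<Sum>j\<le>i. ln (real (a j)))" .
qed

lemma log_box_mult_subset:
  assumes e: "\<And>i. i < k \<Longrightarrow> e i > 0" and f: "\<And>i. i < k \<Longrightarrow> f i > 0"
  shows "log_box k (\<lambda>i. e i * f i) \<subseteq>
    (\<lambda>x. restrict (\<lambda>i. x i + - ln (real (e i))) {..<k}) -` log_box k f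
      \<inter> space (Pi\<^sub>M {..<k} (\<lambda>_. lborel))"
proof
  fix x assume x: "x \<in> log_box k (\<lambda>i. e i * f i)"
  have "restrict (\<lambda>i. x i + - ln (real (e i))) {..<k} \<in> log_box k f"
    unfolding log_box_def
  proof (rule PiE_I)
    fix i assume i_mem: "i \<in> {..<k}"
    then have i: "i < k" by simp
    have "x i \<in> {ln (real (e i * f i) / 2) ..< ln (real (e i * f i))}"
      using PiE_mem[OF x[unfolded log_box_def] i_mem] .
    moreover have "ln (real (e i * f i)) = ln (real (e i)) + ln (real (f i))"
      using e[OF i] f[OF i] by (simp add: ln_mult)
    moreover have "ln (real (e i * f i) / 2) = ln (real (e i * f i)) - ln 2"
      "ln (real (f i) / 2) = ln (real (f i)) - ln 2"
      using e[OF i] f[OF i] by (simp_all add: ln_div)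
    ultimately show "restrict (\<lambda>i. x i + - ln (real (e i))) {..<k} i
        \<in> {ln (real (f i) / 2) ..< ln (real (f i))}"
      using i by simp
  qed simp
  moreover have "x \<in> space (Pi\<^sub>M {..<k} (\<lambda>_. lborel))"
    using x by (auto simp: log_box_def space_PiM PiE_def)
  ultimately show "x \<in> (\<lambda>x. restrict (\<lambda>i. x i + - ln (real (e i))) {..<k}) -` log_box k f
      \<inter> space (Pi\<^sub>M {..<k} (\<lambda>_. lborel))"
    by blast
qed

lemma Lmeas_le_tau:
  assumes "\<forall>i<k. a i > 0"
  shows "Lmeas k a \<le> real (tau k a) * (ln 2) ^ k"
proof -
  have "Lmeas k a \<le> (\<Sum>d\<in>divtuples k a. measure (Pi\<^sub>M {..<k} (\<lambda>_. lborel)) (log_box k d))"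
    unfolding Lmeas_eq_measure_log_boxes using finite_divtuples[OF assms]
    by (intro measure_UNION_le fmeasurableD fmeasurable_log_box divtuples_pos)
  also have "\<dots> = (\<Sum>d\<in>divtuples k a. (ln 2) ^ k)"
    by (intro sum.cong refl measure_log_box divtuples_pos)
  finally show ?thesis
    by (simp add: tau_def)
qed

lemma Lmeas_le_prod:
  assumes apos: "\<forall>i<k. a i > 0"
  shows "Lmeas k a \<le> (\<Prod>i<k. (\<Sum>j\<le>i. ln (real (a j))) + ln 2)"
proof -
  have bounds: "- ln 2 \<le> (\<Sum>j\<le>i. ln (real (a j)))" if "i < k" for i
  proof -
    have "0 \<le> (\<Sum>j\<le>i. ln (real (a j)))"
      using apos that by (intro sum_nonneg ln_ge_zero) (simp add: Suc_le_eq)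
    then show ?thesis
      using ln_ge_zero[of 2] by linarith
  qed
  have "Lmeas k a \<le> measure (Pi\<^sub>M {..<k} (\<lambda>_. lborel))
      (Pi\<^sub>E {..<k} (\<lambda>i. {- ln 2 ..< (\<Sum>j\<le>i. ln (real (a j)))}))"
    unfolding Lmeas_eq_measure_log_boxes using log_box_subset_box[OF _ apos] bounds
    by (intro measure_mono_fmeasurable fmeasurableD[OF fmeasurable_Union_log_boxes[OF apos]]
        fmeasurable_PiM_lborel_box) auto
  also have "\<dots> = (\<Prod>i<k. (\<Sum>j\<le>i. ln (real (a j))) - - ln 2)"
    using bounds by (intro measure_PiM_lborel_box) auto
  finally show ?thesis
    by simp
qed

lemma Lmeas_mult_le:
  assumes apos: "\<forall>i<k. a i > 0" and bpos: "\<forall>i<k. b i > 0"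
    and cop: "coprime (\<Prod>i<k. a i) (\<Prod>i<k. b i)"
  shows "Lmeas k (\<lambda>i. a i * b i) \<le> real (tau k a) * Lmeas k b"
proof -
  let ?M = "Pi\<^sub>M {..<k} (\<lambda>_. lborel)"
  let ?U = "\<lambda>a. \<Union>d\<in>divtuples k a. log_box k d"
  define shift where "shift e = (\<lambda>x. restrict (\<lambda>i. x i + - ln (real (e i))) {..<k})" for e
  define shifted where "shifted e = shift e -` ?U b \<inter> space ?M" for e
  have shifted: "shifted e \<in> fmeasurable ?M" "measure ?M (shifted e) = Lmeas k b" for e
    unfolding shifted_def shift_def Lmeas_eq_measure_log_boxes
    by (rule fmeasurable_PiM_lborel_translate measure_PiM_lborel_translate,
        rule finite_lessThan, rule fmeasurable_Union_log_boxes[OF bpos])+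
  have "?U (\<lambda>i. a i * b i) \<subseteq> (\<Union>e\<in>divtuples k a. shifted e)"
  proof (rule UN_least)
    fix d assume "d \<in> divtuples k (\<lambda>i. a i * b i)"
    then obtain e f where e: "e \<in> divtuples k a" and f: "f \<in> divtuples k b"
      and "\<forall>i<k. d i = e i * f i"
      using divtuples_mult_decompose[OF apos bpos cop] by blast
    then have "log_box k d = log_box k (\<lambda>i. e i * f i)"
      unfolding log_box_def by (intro PiE_cong) auto
    also have "\<dots> \<subseteq> shift e -` log_box k f \<inter> space ?M"
      unfolding shift_def using divtuples_pos[OF e] divtuples_pos[OF f]
      by (intro log_box_mult_subset)
    also have "\<dots> \<subseteq> shifted e"
      using f by (auto simp: shifted_def)
    finally show "log_box k d \<subseteq> (\<Union>e\<in>divtuples k a. shifted e)"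
      using e by blast
  qed
  then have "Lmeas k (\<lambda>i. a i * b i) \<le> measure ?M (\<Union>e\<in>divtuples k a. shifted e)"
    unfolding Lmeas_eq_measure_log_boxes using finite_divtuples[OF apos] shifted(1)
    by (intro measure_mono_fmeasurable fmeasurableD fmeasurable.finite_UN
        fmeasurable_Union_log_boxes) (use apos bpos in auto)
  also have "\<dots> \<le> (\<Sum>e\<in>divtuples k a. measure ?M (shifted e))"
    using finite_divtuples[OF apos] shifted(1) by (intro measure_UNION_le fmeasurableD)
  also have "\<dots> = real (tau k a) * Lmeas k b"
    by (simp add: shifted(2) tau_def)
  finally show ?thesis .
qed

theorem lemma2p1:
  fixes k :: nat
  shows "(\<forall>a. (\<forall>i<k. a i > 0) \<longrightarrow>
            Lmeas k a \<le> min (real (tau k a) * (ln 2) ^ k)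
                             (\<Prod>i<k. (\<Sum>j\<le>i. ln (real (a j))) + ln 2)) \<and>
         (\<forall>a b. (\<forall>i<k. a i > 0) \<and> (\<forall>i<k. b i > 0) \<and>
            coprime (\<Prod>i<k. a i) (\<Prod>i<k. b i) \<longrightarrow>
            Lmeas k (\<lambda>i. a i * b i) \<le> real (tau k a) * Lmeas k b)"
  using Lmeas_le_tau Lmeas_le_prod Lmeas_mult_le by auto

end
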